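(* Let $\mathbb{F}\in\{\mathbb{R},\mathbb{C}\}$, let $m\le n\le 2m$, and let $A_1,\dots,A_m$ be $2\times n$ matrices over $\mathbb{F}$, viewed as the $2\times n\times m$ tensor $(A_1;\dots;A_m)$. Suppose $\dim\langle A_1,\dots,A_m\rangle=m$. Let $\ell\le\lfloor n/2\rfloor$ be an integer such that for every choice of scalars $c_{j,t}\in\mathbb{F}$ ($1\le j\le\ell$, $\ell+1\le t\le m$), setting $A'_j=A_j+c_{j,\ell+1}A_{\ell+1}+\cdots+c_{j,m}A_m$, the $n\times 2\ell$ matrix $({A'_1}^T,\dots,{A'_\ell}^T)$ has rank $2\ell$. Then $\mathrm{rank}_{\mathbb{F}}(A_1;\dots;A_m)\ge m+\ell$.
   Context: $(A_1;\dots;A_r)$ denotes the $p\times n\times r$ tensor whose $k$-th slice is the $p\times n$ matrix $A_k$; $(X_1,\dots,X_r)$ denotes horizontal concatenation of matrices; $\langle A_1,\dots,A_m\rangle$ is the $\mathbb{F}$-linear span of the matrices. A rank-one tensor is one whose slices are $\gamma_k\,\mathbf{a}\mathbf{b}^T$ ($k=1,\dots,r$) for fixed nonzero vectors $\mathbf{a},\mathbf{b}$ and a nonzero vector $(\gamma_1,\dots,\gamma_r)$; $\mathrm{rank}_{\mathbb{F}}$ of a tensor is the minimal number of rank-one tensors over $\mathbb{F}$ summing (slicewise) to it. *)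

theory Defs
  imports Complex_Main
begin

text \<open>Conventions (0-based indices).
  A matrix with r rows and c columns over a field is a function M :: nat => nat => 'a,
  entry M i j for i < r, j < c.
  A p x n x r tensor is a function T :: nat => nat => nat => 'a, where T k is the
  k-th slice (a p x n matrix), k < r.\<close>

definition mats_lin_indep :: "nat \<Rightarrow> nat \<Rightarrow> (nat \<Rightarrow> nat \<Rightarrow> nat \<Rightarrow> 'a::field) \<Rightarrow> nat set \<Rightarrow> bool" where
  "mats_lin_indep p n M S \<longleftrightarrow>
     (\<forall>c :: nat \<Rightarrow> 'a. (\<forall>i<p. \<forall>j<n. (\<Sum>s\<in>S. c s * M s i j) = 0) \<longrightarrow> (\<forall>s\<in>S. c s = 0))"

definition span_dim :: "nat \<Rightarrow> nat \<Rightarrow> nat \<Rightarrow> (nat \<Rightarrow> nat \<Rightarrow> nat \<Rightarrow> 'a::field) \<Rightarrow> nat" where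
  "span_dim p n r M = Max {card S | S. S \<subseteq> {0..<r} \<and> mats_lin_indep p n M S}"

definition mat_rank :: "nat \<Rightarrow> nat \<Rightarrow> (nat \<Rightarrow> nat \<Rightarrow> 'a::field) \<Rightarrow> nat" where
  "mat_rank rows cols M = Max {card S | S. S \<subseteq> {0..<cols} \<and>
      (\<forall>c :: nat \<Rightarrow> 'a. (\<forall>i<rows. (\<Sum>j\<in>S. c j * M i j) = 0) \<longrightarrow> (\<forall>j\<in>S. c j = 0))}"

definition rank_one_decomp ::
  "nat \<Rightarrow> nat \<Rightarrow> nat \<Rightarrow> (nat \<Rightarrow> nat \<Rightarrow> nat \<Rightarrow> 'a::field) \<Rightarrow> nat \<Rightarrow> bool" where
  "rank_one_decomp p n r T R \<longleftrightarrow>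
     (\<exists>(a :: nat \<Rightarrow> nat \<Rightarrow> 'a) (b :: nat \<Rightarrow> nat \<Rightarrow> 'a) (g :: nat \<Rightarrow> nat \<Rightarrow> 'a).
        (\<forall>s<R. (\<exists>i<p. a s i \<noteq> 0) \<and> (\<exists>j<n. b s j \<noteq> 0) \<and> (\<exists>k<r. g s k \<noteq> 0)) \<and>
        (\<forall>k<r. \<forall>i<p. \<forall>j<n. T k i j = (\<Sum>s<R. g s k * a s i * b s j)))"

definition tensor_rank :: "nat \<Rightarrow> nat \<Rightarrow> nat \<Rightarrow> (nat \<Rightarrow> nat \<Rightarrow> nat \<Rightarrow> 'a::field) \<Rightarrow> nat" where
  "tensor_rank p n r T = (LEAST R. rank_one_decomp p n r T R)"

text \<open>A'_j = A_j + sum_{t=l}^{m-1} c j t * A_t (0-based; j < l).\<close>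
definition modified_slice ::
  "nat \<Rightarrow> nat \<Rightarrow> (nat \<Rightarrow> nat \<Rightarrow> nat \<Rightarrow> 'a::field) \<Rightarrow> (nat \<Rightarrow> nat \<Rightarrow> 'a) \<Rightarrow> nat \<Rightarrow> nat \<Rightarrow> nat \<Rightarrow> 'a" where
  "modified_slice m l A c j i q = A j i q + (\<Sum>t\<in>{l..<m}. c j t * A t i q)"

text \<open>The n x 2l matrix (A'_1^T, ..., A'_l^T) for 2 x n slices A'_j:
  its column 2*j + i (j < l, i < 2) is row i of A'_j.\<close>
definition transposed_concat ::
  "(nat \<Rightarrow> nat \<Rightarrow> nat \<Rightarrow> 'a) \<Rightarrow> nat \<Rightarrow> nat \<Rightarrow> 'a" where
  "transposed_concat B q col = B (col div 2) (col mod 2) q"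

end

theory Submission
  imports Defs
begin

(* Proof idea (substitution method).  Take any decomposition of the tensor (A_1;...;A_m)
   into R rank-one terms g_s (a_s b_s^T).  Since A_m is a nonzero slice, some term s has
   g_s(m) <> 0; subtracting suitable multiples of A_m from the other slices kills that
   term, leaving a decomposition of the m-1 slices A'_k = A_k - r_k A_m with R-1 terms.
   The A'_k are still independent, and every modification A'_j + sum c A'_t is again a
   modification of the original tensor, so the rank hypothesis survives.  After m-l such
   steps l slices remain whose 2l transposed rows are independent and all lie in the span
   of the remaining vectors b_s, hence at least 2l terms remain: R >= (m-l) + 2l = m+l. *)

definition indep_family :: "'b set \<Rightarrow> nat \<Rightarrow> (nat \<Rightarrow> 'b \<Rightarrow> 'a::field) \<Rightarrow> bool" where
  "indep_family D N v \<longleftrightarrow>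
     (\<forall>c. (\<forall>x\<in>D. (\<Sum>j<N. c j * v j x) = 0) \<longrightarrow> (\<forall>j<N. c j = 0))"

lemma indep_family_last_nonzero:
  fixes v :: "nat \<Rightarrow> 'b \<Rightarrow> 'a::field"
  assumes "indep_family D (Suc N) v"
  shows "\<exists>x\<in>D. v N x \<noteq> 0"
proof (rule ccontr)
  assume "\<not> (\<exists>x\<in>D. v N x \<noteq> 0)"
  then have "\<forall>x\<in>D. (\<Sum>j<Suc N. (if j = N then 1 else 0) * v j x) = 0"
    by (simp add: if_distrib cong: if_cong)
  then show False
    using assms[unfolded indep_family_def, rule_format, of "\<lambda>j. if j = N then 1 else 0" N]
    by simp
qed

lemma indep_family_eliminate:
  assumes "indep_family D (Suc N) v"
  shows "indep_family D N (\<lambda>j x. v j x - r j * v N x)"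
  unfolding indep_family_def
proof (intro allI impI)
  fix c j
  assume zero: "\<forall>x\<in>D. (\<Sum>j<N. c j * (v j x - r j * v N x)) = 0" and j: "j < N"
  define c' where "c' k = (if k < N then c k else - (\<Sum>i<N. c i * r i))" for k
  have "(\<Sum>k<Suc N. c' k * v k x) = (\<Sum>k<N. c k * (v k x - r k * v N x))" for x
  proof -
    have "(\<Sum>k<Suc N. c' k * v k x) = (\<Sum>k<N. c k * v k x) - (\<Sum>k<N. c k * r k) * v N x"
      by (simp add: c'_def)
    also have "\<dots> = (\<Sum>k<N. c k * (v k x - r k * v N x))"
      by (simp add: right_diff_distrib sum_subtractf sum_distrib_right mult.assoc)
    finally show ?thesis .
  qed
  then have "\<forall>x\<in>D. (\<Sum>k<Suc N. c' k * v k x) = 0"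
    using zero by simp
  then have "\<forall>k<Suc N. c' k = 0"
    using assms unfolding indep_family_def by blast
  then have "c' j = 0"
    using j by simp
  then show "c j = 0"
    using j by (simp add: c'_def)
qed

lemma exchange_step:
  assumes "finite S"
    and indep: "indep_family D (Suc N) v"
    and span: "\<forall>j<Suc N. \<forall>x\<in>D. v j x = (\<Sum>s\<in>S. h j s * w s x)"
  obtains s r where "s \<in> S"
    and "indep_family D N (\<lambda>j x. v j x - r j * v N x)"
    and "\<forall>j<N. \<forall>x\<in>D. v j x - r j * v N x = (\<Sum>t\<in>S-{s}. (h j t - r j * h N t) * w t x)"
proof -
  obtain x where x: "x \<in> D" "v N x \<noteq> 0"
    using indep_family_last_nonzero[OF indep] by blast
  have "\<exists>s\<in>S. h N s \<noteq> 0"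
  proof (rule ccontr)
    assume "\<not> (\<exists>s\<in>S. h N s \<noteq> 0)"
    then have "v N x = 0" using span x(1) by simp
    with x(2) show False by simp
  qed
  then obtain s where s: "s \<in> S" "h N s \<noteq> 0" by blast
  define r where "r j = h j s / h N s" for j
  have span': "\<forall>j<N. \<forall>x\<in>D. v j x - r j * v N x = (\<Sum>t\<in>S-{s}. (h j t - r j * h N t) * w t x)"
  proof (intro allI impI ballI)
    fix j x assume jx: "j < N" "x \<in> D"
    have "v j x - r j * v N x = (\<Sum>t\<in>S. h j t * w t x) - (\<Sum>t\<in>S. r j * h N t * w t x)"
      using span jx by (simp add: sum_distrib_left mult.assoc)
    also have "\<dots> = (\<Sum>t\<in>S. (h j t - r j * h N t) * w t x)"
      by (simp add: sum_subtractf left_diff_distrib)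
    also have "\<dots> = (h j s - r j * h N s) * w s x + (\<Sum>t\<in>S-{s}. (h j t - r j * h N t) * w t x)"
      using assms(1) s(1) by (rule sum.remove)
    also have "h j s - r j * h N s = 0"
      using s(2) by (simp add: r_def)
    finally show "v j x - r j * v N x = (\<Sum>t\<in>S-{s}. (h j t - r j * h N t) * w t x)"
      by simp
  qed
  show ?thesis
    by (rule that[OF s(1) indep_family_eliminate[OF indep] span'])
qed

lemma indep_family_in_span_card_le:
  assumes "finite S" "indep_family D N v"
    and "\<forall>j<N. \<forall>x\<in>D. v j x = (\<Sum>s\<in>S. h j s * w s x)"
  shows "N \<le> card S"
  using assms
proof (induction N arbitrary: v h S)
  case 0
  then show ?case by simp
next
  case (Suc N)
  obtain s r where s: "s \<in> S"
    and "indep_family D N (\<lambda>j x. v j x - r j * v N x)"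
    and "\<forall>j<N. \<forall>x\<in>D. v j x - r j * v N x = (\<Sum>t\<in>S-{s}. (h j t - r j * h N t) * w t x)"
    using exchange_step[OF Suc.prems] by blast
  then have "N \<le> card (S - {s})"
    using Suc.prems(1) by (intro Suc.IH) auto
  then show ?case
    using card_Suc_Diff1[OF Suc.prems(1) s] by simp
qed

definition modifications_full_rank ::
  "nat \<Rightarrow> nat \<Rightarrow> nat \<Rightarrow> (nat \<Rightarrow> nat \<Rightarrow> nat \<Rightarrow> 'a::field) \<Rightarrow> bool" where
  "modifications_full_rank n m l A \<longleftrightarrow>
     (\<forall>c. indep_family {..<n} (2 * l) (\<lambda>col q. transposed_concat (modified_slice m l A c) q col))"

text \<open>Modifying the eliminated slices A_k - r_k A_m (k < m) is the same as modifying the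
  original m+1 slices, with A_m absorbed into the coefficients.\<close>
lemma modified_slice_eliminate:
  fixes A :: "nat \<Rightarrow> nat \<Rightarrow> nat \<Rightarrow> 'a::field"
  assumes "l \<le> m"
  shows "\<exists>c'. modified_slice m l (\<lambda>k i q. A k i q - r k * A m i q) c = modified_slice (Suc m) l A c'"
proof
  define c' where
    "c' j t = (if t < m then c j t else - (r j + (\<Sum>u\<in>{l..<m}. c j u * r u)))" for j t
  show "modified_slice m l (\<lambda>k i q. A k i q - r k * A m i q) c = modified_slice (Suc m) l A c'"
  proof (intro ext)
    fix j i q
    have "{l..<Suc m} = insert m {l..<m}" using assms by auto
    then have "(\<Sum>t\<in>{l..<Suc m}. c' j t * A t i q)
        = c' j m * A m i q + (\<Sum>t\<in>{l..<m}. c' j t * A t i q)"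
      by simp
    also have "(\<Sum>t\<in>{l..<m}. c' j t * A t i q) = (\<Sum>t\<in>{l..<m}. c j t * A t i q)"
      by (rule sum.cong) (auto simp: c'_def)
    finally have old: "(\<Sum>t\<in>{l..<Suc m}. c' j t * A t i q)
        = c' j m * A m i q + (\<Sum>t\<in>{l..<m}. c j t * A t i q)" .
    have new: "(\<Sum>t\<in>{l..<m}. c j t * (A t i q - r t * A m i q))
        = (\<Sum>t\<in>{l..<m}. c j t * A t i q) - (\<Sum>u\<in>{l..<m}. c j u * r u) * A m i q"
      by (simp add: right_diff_distrib sum_subtractf sum_distrib_right mult.assoc)
    show "modified_slice m l (\<lambda>k i q. A k i q - r k * A m i q) c j i q
        = modified_slice (Suc m) l A c' j i q"
      unfolding modified_slice_def old new by (simp add: c'_def algebra_simps)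
  qed
qed

lemma modifications_full_rank_eliminate:
  fixes A :: "nat \<Rightarrow> nat \<Rightarrow> nat \<Rightarrow> 'a::field"
  assumes "l \<le> m" "modifications_full_rank n (Suc m) l A"
  shows "modifications_full_rank n m l (\<lambda>k i q. A k i q - r k * A m i q)"
  unfolding modifications_full_rank_def
proof
  fix c :: "nat \<Rightarrow> nat \<Rightarrow> 'a"
  obtain c' where "modified_slice m l (\<lambda>k i q. A k i q - r k * A m i q) c = modified_slice (Suc m) l A c'"
    using modified_slice_eliminate[OF assms(1)] by blast
  then show "indep_family {..<n} (2 * l)
      (\<lambda>col q. transposed_concat (modified_slice m l (\<lambda>k i q. A k i q - r k * A m i q) c) q col)"
    using assms(2) unfolding modifications_full_rank_def by simp
qed

text \<open>Induction on m: while l < m, one exchange step removes the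
  last slice and one term; when l = m, the 2l rows of the slices are independent vectors
  in the span of the b_s, so Steinitz gives |S| \<ge> 2l.\<close>
lemma decomposition_size_bound:
  fixes A :: "nat \<Rightarrow> nat \<Rightarrow> nat \<Rightarrow> 'a::field"
  assumes "finite S"
    and "\<forall>k<m. \<forall>i<2. \<forall>q<n. A k i q = (\<Sum>s\<in>S. g s k * a s i * b s q)"
    and "indep_family ({..<2} \<times> {..<n}) m (\<lambda>k x. A k (fst x) (snd x))"
    and "modifications_full_rank n m l A"
    and "l \<le> m"
  shows "m + l \<le> card S"
  using assms
proof (induction m arbitrary: A g S)
  case 0
  then show ?case by simp
next
  case (Suc m)
  note fin = Suc.prems(1) and decomp = Suc.prems(2) and indep = Suc.prems(3)
    and full = Suc.prems(4)
  show ?case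
  proof (cases "l = Suc m")
    case True
    have rows: "indep_family {..<n} (2 * l) (\<lambda>col q. A (col div 2) (col mod 2) q)"
      using full[unfolded modifications_full_rank_def, rule_format, of "\<lambda>_ _. 0"]
      by (simp add: transposed_concat_def modified_slice_def)
    have "\<forall>col<2 * l. \<forall>q\<in>{..<n}. A (col div 2) (col mod 2) q
        = (\<Sum>s\<in>S. (g s (col div 2) * a s (col mod 2)) * b s q)"
      using decomp True by auto
    then have "2 * l \<le> card S"
      by (rule indep_family_in_span_card_le[OF fin rows])
    with True show ?thesis by simp
  next
    case False
    then have lm: "l \<le> m" using Suc.prems(5) by simp
    have span: "\<forall>k<Suc m. \<forall>x\<in>{..<2} \<times> {..<n}. A k (fst x) (snd x)
        = (\<Sum>s\<in>S. g s k * (a s (fst x) * b s (snd x)))"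
      using decomp by (auto simp: mult.assoc)
    obtain s r where s: "s \<in> S"
      and indep': "indep_family ({..<2} \<times> {..<n}) m
          (\<lambda>k x. A k (fst x) (snd x) - r k * A m (fst x) (snd x))"
      and span': "\<forall>k<m. \<forall>x\<in>{..<2} \<times> {..<n}. A k (fst x) (snd x) - r k * A m (fst x) (snd x)
          = (\<Sum>t\<in>S-{s}. (g t k - r k * g t m) * (a t (fst x) * b t (snd x)))"
      by (rule exchange_step[OF fin indep span])
    have decomp': "\<forall>k<m. \<forall>i<2. \<forall>q<n. A k i q - r k * A m i q
        = (\<Sum>t\<in>S-{s}. (g t k - r k * g t m) * a t i * b t q)"
      using span' by (auto simp: mult.assoc)
    have "m + l \<le> card (S - {s})"
      using Suc.IH[OF _ decomp' _ modifications_full_rank_eliminate[OF lm full] lm] fin indep'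
      by simp
    then show ?thesis
      using card_Suc_Diff1[OF fin s] by simp
  qed
qed

lemma Max_card_full_index_set:
  assumes "Max {card S | S. S \<subseteq> {0..<N} \<and> P S} = N" and "P {}"
  shows "P {0..<N}"
proof -
  let ?C = "{card S | S. S \<subseteq> {0..<N} \<and> P S}"
  have "finite ?C"
    by (rule finite_subset[of _ "card ` Pow {0..<N}"]) auto
  moreover have "?C \<noteq> {}" using assms(2) by blast
  ultimately have "Max ?C \<in> ?C" by (rule Max_in)
  then obtain S where S: "S \<subseteq> {0..<N}" "P S" "card S = N"
    using assms(1) by auto
  then have "S = {0..<N}" by (simp add: card_subset_eq)
  with S(2) show ?thesis by simp
qed

lemma span_dim_full_indep:
  fixes A :: "nat \<Rightarrow> nat \<Rightarrow> nat \<Rightarrow> 'a::field"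
  assumes "span_dim p n m A = m"
  shows "indep_family ({..<p} \<times> {..<n}) m (\<lambda>k x. A k (fst x) (snd x))"
proof -
  have "mats_lin_indep p n A {0..<m}"
    using assms unfolding span_dim_def
    by (rule Max_card_full_index_set) (simp add: mats_lin_indep_def)
  then show ?thesis
    by (auto simp: mats_lin_indep_def indep_family_def atLeast0LessThan)
qed

lemma mat_rank_full_indep:
  fixes M :: "nat \<Rightarrow> nat \<Rightarrow> 'a::field"
  assumes "mat_rank rows cols M = cols"
  shows "indep_family {..<rows} cols (\<lambda>j i. M i j)"
proof -
  have "(\<lambda>S. \<forall>c :: nat \<Rightarrow> 'a. (\<forall>i<rows. (\<Sum>j\<in>S. c j * M i j) = 0) \<longrightarrow> (\<forall>j\<in>S. c j = 0))
      {0..<cols}"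
    using assms unfolding mat_rank_def by (rule Max_card_full_index_set) simp
  then show ?thesis
    by (simp add: indep_family_def atLeast0LessThan)
qed

text \<open>Every tensor has some rank-one decomposition (one term per nonzero entry), so
  tensor_rank is attained by an actual decomposition.\<close>
lemma rank_one_decomp_exists:
  fixes A :: "nat \<Rightarrow> nat \<Rightarrow> nat \<Rightarrow> 'a::field"
  shows "\<exists>R. rank_one_decomp p n m A R"
proof -
  define P where "P = {(k, i, q). k < m \<and> i < p \<and> q < n \<and> A k i q \<noteq> 0}"
  have "finite P"
    unfolding P_def by (rule finite_subset[of _ "{..<m} \<times> {..<p} \<times> {..<n}"]) auto
  then obtain e where e: "bij_betw e {0..<card P} P"
    using ex_bij_betw_nat_finite by blast
  define a where "a s i' = (if i' = fst (snd (e s)) then 1 else (0::'a))" for s i'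
  define b where "b s q' = (if q' = snd (snd (e s)) then 1 else (0::'a))" for s q'
  define g where "g s k' = (if k' = fst (e s) then A k' (fst (snd (e s))) (snd (snd (e s))) else 0)"
    for s k'
  have "rank_one_decomp p n m A (card P)"
    unfolding rank_one_decomp_def
  proof (rule exI[of _ a], rule exI[of _ b], rule exI[of _ g], intro conjI allI impI)
    fix s assume "s < card P"
    then have "e s \<in> P" using e by (auto simp: bij_betw_def)
    then obtain k i q where kiq: "e s = (k, i, q)" "k < m" "i < p" "q < n" "A k i q \<noteq> 0"
      by (auto simp: P_def)
    show "\<exists>i<p. a s i \<noteq> 0" using kiq by (auto simp: a_def)
    show "\<exists>j<n. b s j \<noteq> 0" using kiq by (auto simp: b_def)
    show "\<exists>k<m. g s k \<noteq> 0" using kiq by (auto simp: g_def)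
  next
    fix k i q assume kiq: "k < m" "i < p" "q < n"
    define F where "F t = (if t = (k, i, q) then A k i q else 0)" for t
    have "(\<Sum>s<card P. g s k * a s i * b s q) = (\<Sum>s\<in>{0..<card P}. F (e s))"
      by (rule sum.cong) (auto simp: F_def g_def a_def b_def prod_eq_iff)
    also have "\<dots> = (\<Sum>t\<in>P. F t)"
      by (rule sum.reindex_bij_betw[OF e])
    also have "\<dots> = A k i q"
      using \<open>finite P\<close> kiq by (cases "A k i q = 0") (auto simp: F_def P_def)
    finally show "A k i q = (\<Sum>s<card P. g s k * a s i * b s q)" by simp
  qed
  then show ?thesis by blast
qed

text \<open>The theorem over an arbitrary field: every decomposition has at least m + l terms.\<close>
lemma tensor_rank_lower_bound:
  fixes A :: "nat \<Rightarrow> nat \<Rightarrow> nat \<Rightarrow> 'a::field"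
  assumes "n \<le> 2 * m" "span_dim 2 n m A = m" "l \<le> n div 2"
    and "\<forall>c :: nat \<Rightarrow> nat \<Rightarrow> 'a.
           mat_rank n (2 * l) (transposed_concat (modified_slice m l A c)) = 2 * l"
  shows "m + l \<le> tensor_rank 2 n m A"
proof -
  have lm: "l \<le> m" using assms(1,3) by linarith
  have indep: "indep_family ({..<2} \<times> {..<n}) m (\<lambda>k x. A k (fst x) (snd x))"
    using span_dim_full_indep[OF assms(2)] .
  have full: "modifications_full_rank n m l A"
    using mat_rank_full_indep assms(4) unfolding modifications_full_rank_def by blast
  have bound: "m + l \<le> R" if "rank_one_decomp 2 n m A R" for R
  proof -
    have "\<exists>a b g. \<forall>k<m. \<forall>i<2. \<forall>q<n. A k i q = (\<Sum>s<R. g s k * a s i * b s q)"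
      using that unfolding rank_one_decomp_def by blast
    then obtain a b g where "\<forall>k<m. \<forall>i<2. \<forall>q<n. A k i q = (\<Sum>s<R. g s k * a s i * b s q)"
      by blast
    from decomposition_size_bound[OF _ this indep full lm] show ?thesis by simp
  qed
  show ?thesis
    unfolding tensor_rank_def using rank_one_decomp_exists by (metis LeastI_ex bound)
qed

theorem mainTheorem6:
  shows
  "(\<forall>(m::nat) (n::nat) (l::nat) (A :: nat \<Rightarrow> nat \<Rightarrow> nat \<Rightarrow> real).
      m \<le> n \<longrightarrow> n \<le> 2 * m \<longrightarrow> span_dim 2 n m A = m \<longrightarrow> l \<le> n div 2 \<longrightarrow>
      (\<forall>c :: nat \<Rightarrow> nat \<Rightarrow> real.
          mat_rank n (2 * l) (transposed_concat (modified_slice m l A c)) = 2 * l) \<longrightarrow>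
      tensor_rank 2 n m A \<ge> m + l)
   \<and>
   (\<forall>(m::nat) (n::nat) (l::nat) (A :: nat \<Rightarrow> nat \<Rightarrow> nat \<Rightarrow> complex).
      m \<le> n \<longrightarrow> n \<le> 2 * m \<longrightarrow> span_dim 2 n m A = m \<longrightarrow> l \<le> n div 2 \<longrightarrow>
      (\<forall>c :: nat \<Rightarrow> nat \<Rightarrow> complex.
          mat_rank n (2 * l) (transposed_concat (modified_slice m l A c)) = 2 * l) \<longrightarrow>
      tensor_rank 2 n m A \<ge> m + l)"
  by (intro conjI allI impI; rule tensor_rank_lower_bound; assumption)

end
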